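(* Let $\alpha\in(0,1]$, $\Theta\in[0,1]$, $\delta_t>0$ and $Q>0$ be given, and define the matrices $$A=\begin{bmatrix}1&0\\ \alpha&0\end{bmatrix},\quad B=-D=\begin{bmatrix}\delta_t&-\delta_t&0&0&0\\ 0&0&\delta_t&-\delta_t&0\end{bmatrix},\quad C=\begin{bmatrix}0&1\end{bmatrix},\quad E=\begin{bmatrix}0&0&0&0&1\end{bmatrix}.$$ Consider the ramp queue system $$x(t+1)=(A+\Delta A(t))x(t)+B\tilde f(t)+Dw(t),\qquad y(t)=Cx(t)+Ew(t),\qquad t=0,1,2,\dots,$$ where $x(t)\in[0,Q]^2$, $\tilde f(t)\in\mathbb{R}^4$ is a known input, $w(t)\in\mathbb{R}^5$ is an unknown noise, and $\Delta A(t)=\begin{bmatrix}0&0\\ \theta(t)&0\end{bmatrix}$ with $\theta(t)$ unknown and $\sup_{t\ge0}|\theta(t)|\le\Theta$. Consider the filter $$\hat x(t+1)=A\hat x(t)+B\tilde f(t)+L\big(y(t)-\hat y(t)\big),\qquad \hat y(t)=C\hat x(t),$$ with initial condition $\hat x(0)\in[0,Q]^2$ and gain $L\in\mathbb{R}^{2\times 1}$, and let $e(t)=x(t)-\hat x(t)$. Suppose there exist a symmetric positive definite matrix $P\in\mathbb{R}^{2\times2}$, a vector $R\in\mathbb{R}^{2}$ and scalars $\mu_1,\mu_2,\mu_3>0$ such that $$\begin{bmatrix} -\mu_3 I & \Theta P & 0 & 0 & 0\\ \Theta P & -P & PA-RC & 0 & PD-RE\\ 0 & (PA-RC)^{\mathrm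 T} & -P+I & 0 & 0\\ 0 & 0 & 0 & (\mu_3-\mu_1)I & 0\\ 0 & (PD-RE)^{\mathrm T} & 0 & 0 & -\mu_2 I \end{bmatrix}\prec 0,$$ where the first four diagonal blocks are $2\times 2$ and the last is $5\times5$. Then, with the filter gain $L=P^{-1}R$, there exists a positive definite function $\gamma$ of $(x(0),\hat x(0))\in[0,Q]^2\times[0,Q]^2$ with values in $\mathbb{R}_{\ge0}$ such that $$\sum_{t=0}^T\|e(t)\|_2^2\le \mu_1\sum_{t=0}^T\|x(t)\|_2^2+\mu_2\sum_{t=0}^T\|w(t)\|_2^2+\gamma(x(0),\hat x(0)),\qquad T=0,1,2,\dots,$$ for any initial conditions $x(0),\hat x(0)\in[0,Q]^2$, any input $\tilde f$, any noise $w$ and any uncertainty $\theta$ with $\sup_{t\ge0}|\theta(t)|\le\Theta$.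
   Context: Model interpretation: $x(t)=(x_{\mathrm{all}}(t),x_{\mathrm{cv}}(t))^{\mathrm T}$ is the number of all vehicles and of connected vehicles queued on a freeway on-ramp (bounded by the maximum queue length $Q$), $\alpha+\theta(t)$ is the connected-vehicle penetration rate, $\delta_t$ is the metering cycle length, $\tilde f(t)$ are measured in/out flows, and $y(t)$ is the measured connected-vehicle count. $\|\cdot\|_2$ is the Euclidean norm; $X\prec0$ means $X$ is symmetric negative definite; $I$ denotes an identity matrix of the appropriate size. *)

theory Defs
  imports "HOL-Analysis.Analysis"
begin

definition neg_def_mat :: "real^'n^'n \<Rightarrow> bool" where
  "neg_def_mat X \<longleftrightarrow> transpose X = X \<and> (\<forall>z. z \<noteq> 0 \<longrightarrow> z \<bullet> (X *v z) < 0)"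

definition pos_def_mat :: "real^'n^'n \<Rightarrow> bool" where
  "pos_def_mat X \<longleftrightarrow> transpose X = X \<and> (\<forall>z. z \<noteq> 0 \<longrightarrow> z \<bullet> (X *v z) > 0)"

type_synonym blk = "2 + (2 + (2 + (2 + 5)))"

definition block5 ::
  "(real^2^2) \<Rightarrow> (real^2^2) \<Rightarrow> (real^2^2) \<Rightarrow> (real^2^2) \<Rightarrow> (real^5^2) \<Rightarrow>
   (real^2^2) \<Rightarrow> (real^2^2) \<Rightarrow> (real^2^2) \<Rightarrow> (real^2^2) \<Rightarrow> (real^5^2) \<Rightarrow>
   (real^2^2) \<Rightarrow> (real^2^2) \<Rightarrow> (real^2^2) \<Rightarrow> (real^2^2) \<Rightarrow> (real^5^2) \<Rightarrow>
   (real^2^2) \<Rightarrow> (real^2^2) \<Rightarrow> (real^2^2) \<Rightarrow> (real^2^2) \<Rightarrow> (real^5^2) \<Rightarrow>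
   (real^2^5) \<Rightarrow> (real^2^5) \<Rightarrow> (real^2^5) \<Rightarrow> (real^2^5) \<Rightarrow> (real^5^5) \<Rightarrow> real^blk^blk"
  where
  "block5 M11 M12 M13 M14 M15 M21 M22 M23 M24 M25 M31 M32 M33 M34 M35
          M41 M42 M43 M44 M45 M51 M52 M53 M54 M55 =
   (\<chi> i j.
     (case i of
        Inl a \<Rightarrow> (case j of Inl b \<Rightarrow> M11$a$b | Inr (Inl b) \<Rightarrow> M12$a$b
                   | Inr (Inr (Inl b)) \<Rightarrow> M13$a$b | Inr (Inr (Inr (Inl b))) \<Rightarrow> M14$a$b
                   | Inr (Inr (Inr (Inr b))) \<Rightarrow> M15$a$b)
      | Inr (Inl a) \<Rightarrow> (case j of Inl b \<Rightarrow> M21$a$b | Inr (Inl b) \<Rightarrow> M22$a$b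
                   | Inr (Inr (Inl b)) \<Rightarrow> M23$a$b | Inr (Inr (Inr (Inl b))) \<Rightarrow> M24$a$b
                   | Inr (Inr (Inr (Inr b))) \<Rightarrow> M25$a$b)
      | Inr (Inr (Inl a)) \<Rightarrow> (case j of Inl b \<Rightarrow> M31$a$b | Inr (Inl b) \<Rightarrow> M32$a$b
                   | Inr (Inr (Inl b)) \<Rightarrow> M33$a$b | Inr (Inr (Inr (Inl b))) \<Rightarrow> M34$a$b
                   | Inr (Inr (Inr (Inr b))) \<Rightarrow> M35$a$b)
      | Inr (Inr (Inr (Inl a))) \<Rightarrow> (case j of Inl b \<Rightarrow> M41$a$b | Inr (Inl b) \<Rightarrow> M42$a$b
                   | Inr (Inr (Inl b)) \<Rightarrow> M43$a$b | Inr (Inr (Inr (Inl b))) \<Rightarrow> M44$a$b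
                   | Inr (Inr (Inr (Inr b))) \<Rightarrow> M45$a$b)
      | Inr (Inr (Inr (Inr a))) \<Rightarrow> (case j of Inl b \<Rightarrow> M51$a$b | Inr (Inl b) \<Rightarrow> M52$a$b
                   | Inr (Inr (Inl b)) \<Rightarrow> M53$a$b | Inr (Inr (Inr (Inl b))) \<Rightarrow> M54$a$b
                   | Inr (Inr (Inr (Inr b))) \<Rightarrow> M55$a$b)))"

definition Amat :: "real \<Rightarrow> real^2^2" where
  "Amat \<alpha> = vector [vector [1, 0], vector [\<alpha>, 0]]"

definition Bmat :: "real \<Rightarrow> real^4^2" where
  "Bmat dt = vector [vector [dt, -dt, 0, 0], vector [0, 0, dt, -dt]]"

definition Dmat :: "real \<Rightarrow> real^5^2" where
  "Dmat dt = vector [vector [-dt, dt, 0, 0, 0], vector [0, 0, -dt, dt, 0]]"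

definition Cmat :: "real^2^1" where
  "Cmat = vector [vector [0, 1]]"

definition Emat :: "real^5^1" where
  "Emat = vector [vector [0, 0, 0, 0, 1]]"

definition DeltaA :: "real \<Rightarrow> real^2^2" where
  "DeltaA th = vector [vector [0, 0], vector [th, 0]]"

definition box2 :: "real \<Rightarrow> (real^2) set" where
  "box2 Q = {z. \<forall>i. 0 \<le> z$i \<and> z$i \<le> Q}"

end

theory Submission
  imports Defs
begin

text \<open>With \<open>V e = e \<bullet> (P *v e)\<close> and \<open>K = P A - R C\<close>, \<open>G = P D - R E\<close>, the gain \<open>L = P\<^sup>-\<^sup>1 R\<close>
  turns the error recursion into \<open>P e(t+1) = K e(t) + G w(t) + P \<Delta>A(t) x(t)\<close>, and
  \<open>\<Delta>A(t) x(t) = \<Theta> a(t)\<close> with \<open>\<parallel>a(t)\<parallel> \<le> \<parallel>x(t)\<parallel>\<close>. Evaluating the LMI on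
  \<open>(a(t), e(t+1), e(t), x(t), w(t))\<close> and eliminating the cross terms by this identity yields the
  dissipation inequality
  \<open>V(e(t+1)) - V(e(t)) + \<parallel>e(t)\<parallel>\<^sup>2 \<le> \<mu>\<^sub>1 \<parallel>x(t)\<parallel>\<^sup>2 + \<mu>\<^sub>2 \<parallel>w(t)\<parallel>\<^sup>2\<close>, which telescopes to the claim with
  \<open>\<gamma>(x\<^sub>0, x\<^sub>h\<^sub>0) = V(x\<^sub>0 - x\<^sub>h\<^sub>0) + \<parallel>(x\<^sub>0, x\<^sub>h\<^sub>0)\<parallel>\<^sup>2\<close>.\<close>

lemma inner_transpose_mult_vec: "(u::real^'n) \<bullet> (transpose K *v v) = (K *v u) \<bullet> v"
  by (metis dot_lmul_matrix inner_commute transpose_transpose vector_transpose_matrix)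

lemma pos_def_mat_nonneg: "pos_def_mat P \<Longrightarrow> 0 \<le> z \<bullet> (P *v z)"
  unfolding pos_def_mat_def by (cases "z = 0") (auto intro: less_imp_le)

lemma neg_def_mat_nonpos: "neg_def_mat M \<Longrightarrow> z \<bullet> (M *v z) \<le> 0"
  unfolding neg_def_mat_def by (cases "z = 0") (auto intro: less_imp_le)

lemma pos_def_mat_invertible:
  assumes "pos_def_mat (P::real^'n^'n)"
  shows "invertible P"
proof -
  have "z = 0" if "P *v z = 0" for z
    using assms that unfolding pos_def_mat_def by (metis inner_zero_right less_irrefl)
  then show ?thesis
    by (simp add: invertible_left_inverse matrix_left_invertible_ker)
qed

lemma invertible_mult_matrix_inv:
  fixes A :: "'a::field^'n^'n"
  assumes "invertible A"
  shows "A ** matrix_inv A = mat 1"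
  using assms unfolding invertible_def matrix_inv_def by (rule someI_ex[THEN conjunct1])

lemma sum_UNIV_Plus:
  "sum f (UNIV :: ('a::finite + 'b::finite) set) = (\<Sum>k\<in>UNIV. f (Inl k)) + (\<Sum>k\<in>UNIV. f (Inr k))"
  using sum.Plus[of "UNIV::'a set" "UNIV::'b set" f] by (simp add: comp_def)

definition block_vec5 :: "real^2 \<Rightarrow> real^2 \<Rightarrow> real^2 \<Rightarrow> real^2 \<Rightarrow> real^5 \<Rightarrow> real^blk" where
  "block_vec5 a b c d g = (\<chi> i. case i of Inl k \<Rightarrow> a$k | Inr (Inl k) \<Rightarrow> b$k
     | Inr (Inr (Inl k)) \<Rightarrow> c$k | Inr (Inr (Inr (Inl k))) \<Rightarrow> d$k | Inr (Inr (Inr (Inr k))) \<Rightarrow> g$k)"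

lemma inner_block_vec5:
  "block_vec5 a b c d g \<bullet> block_vec5 a' b' c' d' g' = a \<bullet> a' + b \<bullet> b' + c \<bullet> c' + d \<bullet> d' + g \<bullet> g'"
  unfolding inner_vec_def block_vec5_def by (simp add: sum_UNIV_Plus add.assoc)

lemma block5_mult_block_vec5:
  "block5 M11 M12 M13 M14 M15 M21 M22 M23 M24 M25 M31 M32 M33 M34 M35
          M41 M42 M43 M44 M45 M51 M52 M53 M54 M55 *v block_vec5 a b c d g =
   block_vec5 (M11 *v a + M12 *v b + M13 *v c + M14 *v d + M15 *v g)
              (M21 *v a + M22 *v b + M23 *v c + M24 *v d + M25 *v g)
              (M31 *v a + M32 *v b + M33 *v c + M34 *v d + M35 *v g)
              (M41 *v a + M42 *v b + M43 *v c + M44 *v d + M45 *v g)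
              (M51 *v a + M52 *v b + M53 *v c + M54 *v d + M55 *v g)"
  unfolding vec_eq_iff split_sum_all
  by (simp add: matrix_vector_mult_def block5_def block_vec5_def sum_UNIV_Plus add.assoc)

lemma quadratic_form_block5:
  "block_vec5 a b c d g \<bullet> (block5 M11 M12 M13 M14 M15 M21 M22 M23 M24 M25 M31 M32 M33 M34 M35
          M41 M42 M43 M44 M45 M51 M52 M53 M54 M55 *v block_vec5 a b c d g) =
   a \<bullet> (M11 *v a) + a \<bullet> (M12 *v b) + a \<bullet> (M13 *v c) + a \<bullet> (M14 *v d) + a \<bullet> (M15 *v g) +
   b \<bullet> (M21 *v a) + b \<bullet> (M22 *v b) + b \<bullet> (M23 *v c) + b \<bullet> (M24 *v d) + b \<bullet> (M25 *v g) +
   c \<bullet> (M31 *v a) + c \<bullet> (M32 *v b) + c \<bullet> (M33 *v c) + c \<bullet> (M34 *v d) + c \<bullet> (M35 *v g) +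
   d \<bullet> (M41 *v a) + d \<bullet> (M42 *v b) + d \<bullet> (M43 *v c) + d \<bullet> (M44 *v d) + d \<bullet> (M45 *v g) +
   g \<bullet> (M51 *v a) + g \<bullet> (M52 *v b) + g \<bullet> (M53 *v c) + g \<bullet> (M54 *v d) + g \<bullet> (M55 *v g)"
  unfolding block5_mult_block_vec5 inner_block_vec5 inner_add_right by (simp only: add.assoc)

lemma uminus_matrix_vector_mult: "(- (M::real^'n^'m)) *v v = - (M *v v)"
  by (simp add: vec_eq_iff matrix_vector_mult_def sum_negf)

lemma lmi_dissipation:
  fixes K :: "real^2^2" and G :: "real^5^2" and a e e' x :: "real^2" and w :: "real^5"
  assumes sym: "transpose P = P"
    and lmi: "neg_def_mat (block5
          (-\<mu>3 *\<^sub>R mat 1) (\<Theta> *\<^sub>R P) 0 0 0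
          (\<Theta> *\<^sub>R P) (-P) K 0 G
          0 (transpose K) (-P + mat 1) 0 0
          0 0 0 ((\<mu>3 - \<mu>1) *\<^sub>R mat 1) 0
          0 (transpose G) 0 0 (-\<mu>2 *\<^sub>R mat 1))"
    and step: "P *v e' = K *v e + G *v w + \<Theta> *\<^sub>R (P *v a)"
  shows "e' \<bullet> (P *v e') - e \<bullet> (P *v e) + e \<bullet> e + \<mu>3 * (x \<bullet> x - a \<bullet> a)
         \<le> \<mu>1 * (x \<bullet> x) + \<mu>2 * (w \<bullet> w)"
proof -
  have "- \<mu>3 * (a \<bullet> a) + \<Theta> * (a \<bullet> (P *v e')) + \<Theta> * (e' \<bullet> (P *v a)) - e' \<bullet> (P *v e')
     + e' \<bullet> (K *v e) + e' \<bullet> (G *v w) + (K *v e) \<bullet> e' - e \<bullet> (P *v e) + e \<bullet> e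
     + (\<mu>3 - \<mu>1) * (x \<bullet> x) + (G *v w) \<bullet> e' - \<mu>2 * (w \<bullet> w) \<le> 0"
    using neg_def_mat_nonpos[OF lmi, of "block_vec5 a e' e x w"]
    by (simp only: quadratic_form_block5 scaleR_matrix_vector_assoc[symmetric] matrix_vector_mul_lid
        matrix_vector_mult_0 inner_zero_right uminus_matrix_vector_mult inner_minus_right
        inner_transpose_mult_vec matrix_vector_mult_add_rdistrib inner_add_right
        inner_scaleR_right add_0_right add_0_left)
  moreover have "e' \<bullet> (P *v e') = e' \<bullet> (K *v e) + e' \<bullet> (G *v w) + \<Theta> * (e' \<bullet> (P *v a))"
    by (simp add: step inner_add_right)
  moreover have "e' \<bullet> (P *v a) = a \<bullet> (P *v e')"
    by (metis sym inner_commute inner_transpose_mult_vec)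
  ultimately show ?thesis
    by (simp add: inner_commute algebra_simps)
qed

lemma observer_error_dynamics:
  fixes P A \<Delta> :: "real^'n^'n" and B :: "real^'m^'n" and D :: "real^'k^'n"
    and C :: "real^'n^'p" and E :: "real^'k^'p" and R :: "real^'p^'n"
  assumes P: "P ** matrix_inv P = mat 1"
    and hx: "x' = (A + \<Delta>) *v x + B *v f + D *v w"
    and hy: "y = C *v x + E *v w"
    and hxh: "xh' = A *v xh + B *v f + (matrix_inv P ** R) *v (y - C *v xh)"
  shows "P *v (x' - xh') = (P ** A - R ** C) *v (x - xh) + (P ** D - R ** E) *v w + P *v (\<Delta> *v x)"
proof -
  have "P *v ((matrix_inv P ** R) *v u) = R *v u" for u
    by (simp add: matrix_vector_mul_assoc matrix_mul_assoc P)
  then show ?thesis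
    unfolding hx hxh hy
    by (simp add: matrix_vector_mult_add_rdistrib matrix_vector_mult_diff_rdistrib
      matrix_vector_right_distrib matrix_vector_mult_diff_distrib matrix_vector_mul_assoc[symmetric]
      algebra_simps)
qed

lemma DeltaA_mult_vec_scaled:
  assumes "\<bar>th\<bar> \<le> \<Theta>"
  obtains a where "DeltaA th *v x = \<Theta> *\<^sub>R a" and "a \<bullet> a \<le> x \<bullet> x"
proof (cases "\<Theta> = 0")
  case True
  then have "DeltaA th *v x = \<Theta> *\<^sub>R 0"
    using assms by (simp add: DeltaA_def vec_eq_iff forall_2 matrix_vector_mult_def sum_2)
  then show ?thesis by (rule that) simp
next
  case False
  let ?a = "vector [0, th / \<Theta> * x$1] :: real^2"
  have "DeltaA th *v x = \<Theta> *\<^sub>R ?a"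
    using False by (simp add: DeltaA_def vec_eq_iff forall_2 matrix_vector_mult_def sum_2)
  moreover have "\<bar>th / \<Theta>\<bar> \<le> \<bar>1\<bar>"
    using assms False by (simp add: abs_divide)
  then have "(th / \<Theta>)\<^sup>2 \<le> 1"
    by (metis abs_le_square_iff power_one)
  then have "(th / \<Theta>)\<^sup>2 * (x$1)\<^sup>2 \<le> (x$1)\<^sup>2 + (x$2)\<^sup>2"
    by (simp add: mult_left_le_one_le add_increasing2)
  then have "?a \<bullet> ?a \<le> x \<bullet> x"
    by (simp add: inner_vec_def sum_2 power2_eq_square algebra_simps)
  ultimately show ?thesis by (rule that)
qed

lemma filter_error_dissipation:
  fixes P :: "real^2^2" and R :: "real^1^2" and x xh x' xh' :: "real^2"
    and y :: "real^1" and f :: "real^4" and w :: "real^5"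
  assumes P: "pos_def_mat P" and "0 < \<mu>3"
    and lmi: "neg_def_mat (block5
          (-\<mu>3 *\<^sub>R mat 1) (\<Theta> *\<^sub>R P) 0 0 0
          (\<Theta> *\<^sub>R P) (-P) (P ** Amat \<alpha> - R ** Cmat) 0 (P ** Dmat dt - R ** Emat)
          0 (transpose (P ** Amat \<alpha> - R ** Cmat)) (-P + mat 1) 0 0
          0 0 0 ((\<mu>3 - \<mu>1) *\<^sub>R mat 1) 0
          0 (transpose (P ** Dmat dt - R ** Emat)) 0 0 (-\<mu>2 *\<^sub>R mat 1))"
    and "\<bar>th\<bar> \<le> \<Theta>"
    and "x' = (Amat \<alpha> + DeltaA th) *v x + Bmat dt *v f + Dmat dt *v w"
    and "y = Cmat *v x + Emat *v w"
    and "xh' = Amat \<alpha> *v xh + Bmat dt *v f + (matrix_inv P ** R) *v (y - Cmat *v xh)"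
  shows "(x' - xh') \<bullet> (P *v (x' - xh')) - (x - xh) \<bullet> (P *v (x - xh)) + (x - xh) \<bullet> (x - xh)
         \<le> \<mu>1 * (x \<bullet> x) + \<mu>2 * (w \<bullet> w)"
proof -
  obtain a where a: "DeltaA th *v x = \<Theta> *\<^sub>R a" and "a \<bullet> a \<le> x \<bullet> x"
    using DeltaA_mult_vec_scaled \<open>\<bar>th\<bar> \<le> \<Theta>\<close> by blast
  have "P *v (x' - xh') = (P ** Amat \<alpha> - R ** Cmat) *v (x - xh) + (P ** Dmat dt - R ** Emat) *v w
      + \<Theta> *\<^sub>R (P *v a)"
    using observer_error_dynamics[OF invertible_mult_matrix_inv[OF pos_def_mat_invertible[OF P]]
        assms(5-7)]
    by (simp only: a matrix_vector_mult_scaleR)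
  moreover have "transpose P = P"
    using P unfolding pos_def_mat_def by blast
  ultimately have "(x' - xh') \<bullet> (P *v (x' - xh')) - (x - xh) \<bullet> (P *v (x - xh)) + (x - xh) \<bullet> (x - xh)
      + \<mu>3 * (x \<bullet> x - a \<bullet> a) \<le> \<mu>1 * (x \<bullet> x) + \<mu>2 * (w \<bullet> w)"
    using lmi_dissipation[OF _ lmi] by blast
  moreover have "0 \<le> \<mu>3 * (x \<bullet> x - a \<bullet> a)"
    using \<open>0 < \<mu>3\<close> \<open>a \<bullet> a \<le> x \<bullet> x\<close> by simp
  ultimately show ?thesis by linarith
qed

lemma sum_le_sum_plus_storage:
  fixes V s r :: "nat \<Rightarrow> real"
  assumes "\<And>t. V (Suc t) - V t + s t \<le> r t" and "\<And>t. 0 \<le> V t"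
  shows "(\<Sum>t\<le>T. s t) \<le> (\<Sum>t\<le>T. r t) + V 0"
proof -
  have "(\<Sum>t\<le>T. s t) + V (Suc T) \<le> (\<Sum>t\<le>T. r t) + V 0"
  proof (induction T)
    case 0
    then show ?case using assms(1)[of 0] by simp
  next
    case (Suc T)
    then show ?case using assms(1)[of "Suc T"] by simp
  qed
  then show ?thesis using assms(2)[of "Suc T"] by linarith
qed

lemma filter_error_energy_bound:
  fixes P :: "real^2^2" and R :: "real^1^2" and x xh :: "nat \<Rightarrow> real^2"
    and y :: "nat \<Rightarrow> real^1" and f :: "nat \<Rightarrow> real^4" and w :: "nat \<Rightarrow> real^5"
  assumes P: "pos_def_mat P" and "0 < \<mu>3"
    and lmi: "neg_def_mat (block5
          (-\<mu>3 *\<^sub>R mat 1) (\<Theta> *\<^sub>R P) 0 0 0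
          (\<Theta> *\<^sub>R P) (-P) (P ** Amat \<alpha> - R ** Cmat) 0 (P ** Dmat dt - R ** Emat)
          0 (transpose (P ** Amat \<alpha> - R ** Cmat)) (-P + mat 1) 0 0
          0 0 0 ((\<mu>3 - \<mu>1) *\<^sub>R mat 1) 0
          0 (transpose (P ** Dmat dt - R ** Emat)) 0 0 (-\<mu>2 *\<^sub>R mat 1))"
    and "\<And>t. \<bar>\<theta> t\<bar> \<le> \<Theta>"
    and "\<And>t. x (Suc t) = (Amat \<alpha> + DeltaA (\<theta> t)) *v x t + Bmat dt *v f t + Dmat dt *v w t"
    and "\<And>t. y t = Cmat *v x t + Emat *v w t"
    and "\<And>t. xh (Suc t) = Amat \<alpha> *v xh t + Bmat dt *v f t + (matrix_inv P ** R) *v (y t - Cmat *v xh t)"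
  shows "(\<Sum>t\<le>T. (norm (x t - xh t))\<^sup>2)
    \<le> \<mu>1 * (\<Sum>t\<le>T. (norm (x t))\<^sup>2) + \<mu>2 * (\<Sum>t\<le>T. (norm (w t))\<^sup>2)
      + (x 0 - xh 0) \<bullet> (P *v (x 0 - xh 0))"
proof -
  let ?V = "\<lambda>t. (x t - xh t) \<bullet> (P *v (x t - xh t))"
  have "?V (Suc t) - ?V t + (norm (x t - xh t))\<^sup>2 \<le> \<mu>1 * (norm (x t))\<^sup>2 + \<mu>2 * (norm (w t))\<^sup>2" for t
    unfolding power2_norm_eq_inner by (rule filter_error_dissipation[OF P \<open>0 < \<mu>3\<close> lmi assms(4-7)])
  from sum_le_sum_plus_storage[of ?V, OF this pos_def_mat_nonneg[OF P], of T]
  show ?thesis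
    by (simp add: sum.distrib sum_distrib_left)
qed

theorem theorem1:
  fixes \<alpha> \<Theta> dt Q \<mu>1 \<mu>2 \<mu>3 :: real
    and P :: "real^2^2" and R :: "real^1^2"
  assumes "0 < \<alpha>" "\<alpha> \<le> 1" "0 \<le> \<Theta>" "\<Theta> \<le> 1" "0 < dt" "0 < Q"
    and "pos_def_mat P"
    and "0 < \<mu>1" "0 < \<mu>2" "0 < \<mu>3"
    and "neg_def_mat (block5
          (-\<mu>3 *\<^sub>R mat 1) (\<Theta> *\<^sub>R P) 0 0 0
          (\<Theta> *\<^sub>R P) (-P) (P ** Amat \<alpha> - R ** Cmat) 0 (P ** Dmat dt - R ** Emat)
          0 (transpose (P ** Amat \<alpha> - R ** Cmat)) (-P + mat 1) 0 0
          0 0 0 ((\<mu>3 - \<mu>1) *\<^sub>R mat 1) 0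
          0 (transpose (P ** Dmat dt - R ** Emat)) 0 0 (-\<mu>2 *\<^sub>R mat 1))"
  shows "\<exists>\<gamma> :: real^2 \<Rightarrow> real^2 \<Rightarrow> real.
     \<gamma> 0 0 = 0 \<and>
     (\<forall>x0 \<in> box2 Q. \<forall>xh0 \<in> box2 Q. \<gamma> x0 xh0 \<ge> 0 \<and> ((x0, xh0) \<noteq> (0, 0) \<longrightarrow> \<gamma> x0 xh0 > 0)) \<and>
     (\<forall>(x :: nat \<Rightarrow> real^2) (xh :: nat \<Rightarrow> real^2) (y :: nat \<Rightarrow> real^1)
        (f :: nat \<Rightarrow> real^4) (w :: nat \<Rightarrow> real^5) (\<theta> :: nat \<Rightarrow> real).
        (\<forall>t. x t \<in> box2 Q) \<longrightarrow> xh 0 \<in> box2 Q \<longrightarrow> (\<forall>t. \<bar>\<theta> t\<bar> \<le> \<Theta>) \<longrightarrow>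
        (\<forall>t. x (Suc t) = (Amat \<alpha> + DeltaA (\<theta> t)) *v x t + Bmat dt *v f t + Dmat dt *v w t) \<longrightarrow>
        (\<forall>t. y t = Cmat *v x t + Emat *v w t) \<longrightarrow>
        (\<forall>t. xh (Suc t) = Amat \<alpha> *v xh t + Bmat dt *v f t
                + (matrix_inv P ** R) *v (y t - Cmat *v xh t)) \<longrightarrow>
        (\<forall>T. (\<Sum>t\<le>T. (norm (x t - xh t))\<^sup>2)
              \<le> \<mu>1 * (\<Sum>t\<le>T. (norm (x t))\<^sup>2) + \<mu>2 * (\<Sum>t\<le>T. (norm (w t))\<^sup>2)
                + \<gamma> (x 0) (xh 0)))"
proof -
  define \<gamma> where
    "\<gamma> x0 xh0 = (x0 - xh0) \<bullet> (P *v (x0 - xh0)) + (norm (x0, xh0))\<^sup>2" for x0 xh0 :: "real^2"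
  have V_nonneg: "0 \<le> v \<bullet> (P *v v)" for v
    using pos_def_mat_nonneg[OF assms(7)] .
  have "\<gamma> 0 0 = 0"
    unfolding \<gamma>_def by simp
  moreover have "\<gamma> x0 xh0 \<ge> 0 \<and> ((x0, xh0) \<noteq> (0, 0) \<longrightarrow> \<gamma> x0 xh0 > 0)" for x0 xh0
    using V_nonneg[of "x0 - xh0"] unfolding \<gamma>_def zero_prod_def[symmetric]
    by (simp add: add_nonneg_pos)
  ultimately show ?thesis
    by (intro exI[of _ \<gamma>] conjI ballI allI impI)
      (auto intro!: order_trans[OF filter_error_energy_bound[OF assms(7,10,11)]] simp: \<gamma>_def)
qed

end
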